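(* Let $n\geq 3$, $k\in\mathbb{Z}_n$ with $k\neq 0$ and $2k\not\equiv 0\pmod n$, and let $C$ be a total perfect code in $\mathrm{GP}(n,k)$. If $E(C)\cap E(U)\neq\emptyset$, then $E(C)\cap E(U,V)=\emptyset$.
   Context: For an integer $n\geq 3$ and a nonzero $k\in\mathbb{Z}_n$, the generalized Petersen graph $\mathrm{GP}(n,k)$ is the simple graph with vertex set $\{u_i,v_i\mid i\in\mathbb{Z}_n\}$ and edges $u_iu_{i+1}$, $u_iv_i$, $v_iv_{i+k}$ for all $i\in\mathbb{Z}_n$ (indices modulo $n$). Let $U=\{u_i\mid i\in\mathbb{Z}_n\}$ and $V=\{v_i\mid i\in\mathbb{Z}_n\}$. For vertex subsets $A,B$, $E(A,B)$ is the set of edges with one end in $A$ and the other in $B$, and $E(A)=E(A,A)$. A total perfect code in a graph $\Gamma$ is a set $C\subseteq V(\Gamma)$ such that every vertex of $\Gamma$ is adjacent to exactly one vertex of $C$. *)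

theory Defs
  imports Main
begin

datatype gpv = U nat | V nat

definition gp_vertices :: "nat \<Rightarrow> gpv set" where
  "gp_vertices n = U ` {..<n} \<union> V ` {..<n}"

definition gp_adj :: "nat \<Rightarrow> nat \<Rightarrow> gpv \<Rightarrow> gpv \<Rightarrow> bool" where
  "gp_adj n k x y \<longleftrightarrow> x \<in> gp_vertices n \<and> y \<in> gp_vertices n \<and> x \<noteq> y \<and>
     (\<exists>i<n. ({x, y} = {U i, U ((i + 1) mod n)}) \<or> ({x, y} = {U i, V i})
            \<or> ({x, y} = {V i, V ((i + k) mod n)}))"

definition gp_edges :: "nat \<Rightarrow> nat \<Rightarrow> gpv set set" where
  "gp_edges n k = {{x, y} | x y. gp_adj n k x y}"

definition Uset :: "nat \<Rightarrow> gpv set" where "Uset n = U ` {..<n}"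
definition Vset :: "nat \<Rightarrow> gpv set" where "Vset n = V ` {..<n}"

definition edges_between :: "nat \<Rightarrow> nat \<Rightarrow> gpv set \<Rightarrow> gpv set \<Rightarrow> gpv set set" where
  "edges_between n k A B = {{x, y} | x y. gp_adj n k x y \<and> x \<in> A \<and> y \<in> B}"

definition total_perfect_code :: "nat \<Rightarrow> nat \<Rightarrow> gpv set \<Rightarrow> bool" where
  "total_perfect_code n k C \<longleftrightarrow> C \<subseteq> gp_vertices n \<and>
     (\<forall>x \<in> gp_vertices n. \<exists>!c. c \<in> C \<and> gp_adj n k x c)"

end

theory Submission
  imports Defs
begin

(* The graph on Z x Z x {u, v} with u(a,b) ~ u(a+-1,b), v(a,b) ~ v(a,b+-1) and u(a,b) ~ v(a,b)
  covers GP(n,k) via (a,b) |-> a + b k, so a total perfect code of GP(n,k) lifts to one of this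
  lattice (n >= 3 and 2k =/= 0 mod n keep the three neighbours of a vertex distinct).
  In the lattice, a code edge u(x,y) v(x,y) forces the code edge u(x+3,y) v(x+3,y) by a finite
  case check, so on row y the code meets the u-layer exactly in the points u(x+3t,y), and no
  u-edge of row y is a code edge. A code edge u_i v_i and a code edge u_j u_(j+1) of GP(n,k)
  lift into the same row, which gives the contradiction. *)

definition mod_rep :: "nat \<Rightarrow> int \<Rightarrow> nat" where
  "mod_rep n z = nat (z mod int n)"

lemma mod_rep_less: "0 < n \<Longrightarrow> mod_rep n z < n"
  by (simp add: mod_rep_def nat_less_iff)

lemma mod_rep_of_nat [simp]: "mod_rep n (int m) = m mod n"
  by (simp add: mod_rep_def flip: of_nat_mod)

lemma int_mod_rep: "0 < n \<Longrightarrow> int (mod_rep n z) = z mod int n"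
  by (simp add: mod_rep_def)

lemma mod_rep_eq_iff: "0 < n \<Longrightarrow> mod_rep n z = mod_rep n w \<longleftrightarrow> int n dvd z - w"
  by (metis int_mod_rep mod_eq_dvd_iff of_nat_eq_iff)

lemma mod_rep_eq_nat_iff: "0 < n \<Longrightarrow> j < n \<Longrightarrow> mod_rep n z = j \<longleftrightarrow> int n dvd z - int j"
  by (metis mod_less mod_rep_eq_iff mod_rep_of_nat)

lemma add_mod_eq_mod_rep: "(i + s) mod n = mod_rep n (int i + int s)"
  by (metis mod_rep_of_nat of_nat_add)

lemma mod_rep_add_mod_rep [simp]:
  "0 < n \<Longrightarrow> mod_rep n (int (mod_rep n z) + c) = mod_rep n (z + c)"
  by (simp add: int_mod_rep mod_rep_def mod_add_left_eq)

lemma mod_rep_diff_mod_rep [simp]: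
  "0 < n \<Longrightarrow> mod_rep n (int (mod_rep n z) - c) = mod_rep n (z - c)"
  by (simp add: int_mod_rep mod_rep_def mod_diff_left_eq)

lemma gpv_in_gp_vertices_iff [simp]:
  "U j \<in> gp_vertices n \<longleftrightarrow> j < n" "V j \<in> gp_vertices n \<longleftrightarrow> j < n"
  by (auto simp: gp_vertices_def)

lemma cycle_step_edge_iff:
  assumes "inj W" "0 < n" "j < n"
  shows "(\<exists>i<n. {W j, y} = {W i, W ((i + s) mod n)})
    \<longleftrightarrow> y = W (mod_rep n (int j + int s)) \<or> y = W (mod_rep n (int j - int s))"
proof
  assume "\<exists>i<n. {W j, y} = {W i, W ((i + s) mod n)}"
  then obtain i where "i < n" and "{W j, y} = {W i, W (mod_rep n (int i + int s))}"
    by (auto simp: add_mod_eq_mod_rep)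
  then consider "j = i" "y = W (mod_rep n (int i + int s))"
    | "j = mod_rep n (int i + int s)" "y = W i"
    using assms(1) by (auto simp: doubleton_eq_iff inj_eq)
  then show "y = W (mod_rep n (int j + int s)) \<or> y = W (mod_rep n (int j - int s))"
    by cases (use \<open>i < n\<close> assms(2) in auto)
next
  assume "y = W (mod_rep n (int j + int s)) \<or> y = W (mod_rep n (int j - int s))"
  then show "\<exists>i<n. {W j, y} = {W i, W ((i + s) mod n)}"
  proof
    assume "y = W (mod_rep n (int j + int s))"
    with assms show ?thesis
      by (auto simp: add_mod_eq_mod_rep)
  next
    assume y: "y = W (mod_rep n (int j - int s))"
    let ?i = "mod_rep n (int j - int s)"
    have "(?i + s) mod n = j"
      using assms by (simp add: add_mod_eq_mod_rep)
    with y assms show ?thesis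
      by (metis mod_rep_less insert_commute)
  qed
qed

lemma gp_adj_iff:
  "gp_adj n k x y \<longleftrightarrow> x \<in> gp_vertices n \<and> y \<in> gp_vertices n \<and> x \<noteq> y \<and>
     ((\<exists>i<n. {x, y} = {U i, U ((i + 1) mod n)}) \<or> (\<exists>i<n. {x, y} = {U i, V i})
      \<or> (\<exists>i<n. {x, y} = {V i, V ((i + k) mod n)}))"
  unfolding gp_adj_def by blast

lemma gp_adj_U_iff:
  assumes "2 \<le> n" "j < n"
  shows "gp_adj n k (U j) y \<longleftrightarrow>
    y = U (mod_rep n (int j + 1)) \<or> y = U (mod_rep n (int j - 1)) \<or> y = V j"
proof -
  have "(\<exists>i<n. {U j, y} = {U i, V i}) \<longleftrightarrow> y = V j"
    using assms by (auto simp: doubleton_eq_iff)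
  moreover have "\<not> (\<exists>i<n. {U j, y} = {V i, V ((i + k) mod n)})"
    by (auto simp: doubleton_eq_iff)
  moreover have "(\<exists>i<n. {U j, y} = {U i, U ((i + 1) mod n)}) \<longleftrightarrow>
      y = U (mod_rep n (int j + 1)) \<or> y = U (mod_rep n (int j - 1))"
    using cycle_step_edge_iff[of U n j y 1] assms by (simp add: inj_def)
  moreover have "U (mod_rep n (int j + 1)) \<noteq> U j" "U (mod_rep n (int j - 1)) \<noteq> U j"
    using assms by (auto simp: mod_rep_eq_nat_iff)
  ultimately show ?thesis
    using assms by (auto simp: gp_adj_iff mod_rep_less)
qed

lemma gp_adj_V_iff:
  assumes "0 < k" "k < n" "j < n"
  shows "gp_adj n k (V j) y \<longleftrightarrow>
    y = V (mod_rep n (int j + int k)) \<or> y = V (mod_rep n (int j - int k)) \<or> y = U j"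
proof -
  have "(\<exists>i<n. {V j, y} = {U i, V i}) \<longleftrightarrow> y = U j"
    using assms by (auto simp: doubleton_eq_iff)
  moreover have "\<not> (\<exists>i<n. {V j, y} = {U i, U ((i + 1) mod n)})"
    by (auto simp: doubleton_eq_iff)
  moreover have "(\<exists>i<n. {V j, y} = {V i, V ((i + k) mod n)}) \<longleftrightarrow>
      y = V (mod_rep n (int j + int k)) \<or> y = V (mod_rep n (int j - int k))"
    using cycle_step_edge_iff[of V n j y k] assms by (simp add: inj_def)
  moreover have "V (mod_rep n (int j + int k)) \<noteq> V j" "V (mod_rep n (int j - int k)) \<noteq> V j"
    using assms zdvd_imp_le[of "int n" "int k"] by (auto simp: mod_rep_eq_nat_iff)
  ultimately show ?thesis
    using assms by (auto simp: gp_adj_iff mod_rep_less)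
qed

definition exactly_one :: "bool \<Rightarrow> bool \<Rightarrow> bool \<Rightarrow> bool" where
  "exactly_one p q r \<longleftrightarrow> (p \<or> q \<or> r) \<and> \<not> (p \<and> q) \<and> \<not> (p \<and> r) \<and> \<not> (q \<and> r)"

lemma exactly_one_commute: "exactly_one p q r \<longleftrightarrow> exactly_one q p r"
  unfolding exactly_one_def by blast

lemma ex1_mem_three_iff_exactly_one:
  assumes "distinct [x, y, z]"
  shows "(\<exists>!c. c \<in> C \<and> (c = x \<or> c = y \<or> c = z)) \<longleftrightarrow> exactly_one (x \<in> C) (y \<in> C) (z \<in> C)"
  using assms unfolding exactly_one_def by auto

(* Total perfect codes of the lattice graph described above; cu a b and cv a b say whether
  u(a,b) and v(a,b) belong to the code. *)
definition lattice_tpc :: "(int \<Rightarrow> int \<Rightarrow> bool) \<Rightarrow> (int \<Rightarrow> int \<Rightarrow> bool) \<Rightarrow> bool" where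
  "lattice_tpc cu cv \<longleftrightarrow> (\<forall>a b.
     exactly_one (cu (a + 1) b) (cu (a - 1) b) (cv a b) \<and>
     exactly_one (cv a (b + 1)) (cv a (b - 1)) (cu a b))"

lemma lattice_tpc_translate:
  assumes "lattice_tpc cu cv"
  shows "lattice_tpc (\<lambda>a b. cu (a + x) (b + y)) (\<lambda>a b. cv (a + x) (b + y))"
  unfolding lattice_tpc_def
proof (intro allI)
  fix a b
  from assms have "exactly_one (cu (a + x + 1) (b + y)) (cu (a + x - 1) (b + y)) (cv (a + x) (b + y))"
      "exactly_one (cv (a + x) (b + y + 1)) (cv (a + x) (b + y - 1)) (cu (a + x) (b + y))"
    unfolding lattice_tpc_def by blast+
  then show "exactly_one (cu (a + 1 + x) (b + y)) (cu (a - 1 + x) (b + y)) (cv (a + x) (b + y)) \<and>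
      exactly_one (cv (a + x) (b + 1 + y)) (cv (a + x) (b - 1 + y)) (cu (a + x) (b + y))"
    by (simp add: algebra_simps)
qed

lemma lattice_tpc_reflect:
  assumes "lattice_tpc cu cv"
  shows "lattice_tpc (\<lambda>a b. cu (- a) b) (\<lambda>a b. cv (- a) b)"
  unfolding lattice_tpc_def
proof (intro allI)
  fix a b :: int
  have "- (a + 1) = - a - 1" "- (a - 1) = - a + 1"
    by simp_all
  with assms show "exactly_one (cu (- (a + 1)) b) (cu (- (a - 1)) b) (cv (- a) b) \<and>
      exactly_one (cv (- a) (b + 1)) (cv (- a) (b - 1)) (cu (- a) b)"
    unfolding lattice_tpc_def by (metis exactly_one_commute)
qed

lemma lattice_tpc_rung_step:
  assumes "lattice_tpc cu cv" "cu 0 0" "cv 0 0"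
  shows "cu 3 0 \<and> cv 3 0"
proof -
  have U: "exactly_one (cu (a + 1) b) (cu (a - 1) b) (cv a b)"
    and V: "exactly_one (cv a (b + 1)) (cv a (b - 1)) (cu a b)" for a b
    using assms(1) unfolding lattice_tpc_def by blast+
  \<comment> \<open>The constraints at these points of the window [-2,3] x [-1,3] already admit no
    assignment with a code edge at the origin but none at (3,0).\<close>
  note window = U[of "-2" "-1"] U[of "-2" 1] U[of "-1" 0] U[of "-1" 2] U[of 0 "-1"] U[of 0 0]
    U[of 0 1] U[of 1 "-1"] U[of 1 0] U[of 1 1] U[of 1 2] U[of 2 "-1"] U[of 2 0] U[of 2 1]
    U[of 2 3] U[of 3 2]
    V[of "-2" 0] V[of "-1" 1] V[of 0 "-1"] V[of 0 0] V[of 0 1] V[of 1 0] V[of 1 1] V[of 1 3]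
    V[of 2 "-1"] V[of 2 0] V[of 2 1] V[of 2 2] V[of 3 1] V[of 3 3]
  show ?thesis
    using window[simplified] assms(2,3) unfolding exactly_one_def by sat
qed

lemma lattice_tpc_rung_shift:
  assumes "lattice_tpc cu cv" "cu x y" "cv x y"
  shows "cu (x + 3) y \<and> cv (x + 3) y" and "cu (x - 3) y \<and> cv (x - 3) y"
proof -
  show "cu (x + 3) y \<and> cv (x + 3) y"
    using lattice_tpc_rung_step[OF lattice_tpc_translate[OF assms(1), of x y]] assms(2,3)
    by (simp add: add.commute)
  show "cu (x - 3) y \<and> cv (x - 3) y"
    using lattice_tpc_rung_step
        [OF lattice_tpc_translate[OF lattice_tpc_reflect[OF assms(1)], of "- x" y]] assms(2,3)
    by simp
qed

lemma lattice_tpc_rungs_periodic: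
  assumes "lattice_tpc cu cv" "cu x y" "cv x y"
  shows "cu (x + 3 * t) y \<and> cv (x + 3 * t) y"
proof (induction t rule: int_induct[where k = 0])
  case base
  then show ?case using assms(2,3) by simp
next
  case (step1 t)
  then have "cu (x + 3 * t + 3) y \<and> cv (x + 3 * t + 3) y"
    using lattice_tpc_rung_shift(1)[OF assms(1)] by blast
  then show ?case by (simp add: algebra_simps)
next
  case (step2 t)
  then have "cu (x + 3 * t - 3) y \<and> cv (x + 3 * t - 3) y"
    using lattice_tpc_rung_shift(2)[OF assms(1)] by blast
  then show ?case by (simp add: algebra_simps)
qed

lemma lattice_tpc_rung_row_no_U_edge:
  assumes "lattice_tpc cu cv" "cu x y" "cv x y"
  shows "\<not> (cu a y \<and> cu (a + 1) y)"
proof -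
  have U: "exactly_one (cu (c + 1) y) (cu (c - 1) y) (cv c y)" for c
    using assms(1) unfolding lattice_tpc_def by blast
  have "\<not> cu (x + 3 * t + 1) y" "\<not> cu (x + 3 * t - 1) y" for t
    using U[of "x + 3 * t"] lattice_tpc_rungs_periodic[OF assms]
    unfolding exactly_one_def by blast+
  moreover have "3 dvd c - x \<or> (\<exists>t. c = x + 3 * t + 1) \<or> (\<exists>t. c = x + 3 * t - 1)" for c
    by presburger
  ultimately have "3 dvd c - x" if "cu c y" for c
    using that by blast
  moreover have "\<not> (3 dvd a - x \<and> 3 dvd a + 1 - x)"
    by presburger
  ultimately show ?thesis
    by blast
qed

definition gp_cover :: "nat \<Rightarrow> nat \<Rightarrow> int \<Rightarrow> int \<Rightarrow> nat" where
  "gp_cover n k a b = mod_rep n (a + b * int k)"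

lemma gp_cover_neighbours:
  assumes "0 < n"
  shows "mod_rep n (int (gp_cover n k a b) + 1) = gp_cover n k (a + 1) b"
    and "mod_rep n (int (gp_cover n k a b) - 1) = gp_cover n k (a - 1) b"
    and "mod_rep n (int (gp_cover n k a b) + int k) = gp_cover n k a (b + 1)"
    and "mod_rep n (int (gp_cover n k a b) - int k) = gp_cover n k a (b - 1)"
  using assms unfolding gp_cover_def by (simp_all, simp_all add: algebra_simps)

lemma lattice_tpc_of_total_perfect_code:
  assumes "3 \<le> n" "0 < k" "k < n" "(2 * k) mod n \<noteq> 0" "total_perfect_code n k C"
  shows "lattice_tpc (\<lambda>a b. U (gp_cover n k a b) \<in> C) (\<lambda>a b. V (gp_cover n k a b) \<in> C)"
  unfolding lattice_tpc_def
proof (intro allI conjI)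
  fix a b
  let ?j = "gp_cover n k a b"
  have n: "0 < n" and j: "?j < n"
    using assms by (auto simp: gp_cover_def mod_rep_less)
  have code: "\<exists>!c. c \<in> C \<and> gp_adj n k x c" if "x \<in> gp_vertices n" for x
    using assms(5) that unfolding total_perfect_code_def by blast
  have "gp_cover n k (a + 1) b \<noteq> gp_cover n k (a - 1) b"
    using n assms(1) zdvd_imp_le[of "int n" 2] by (auto simp: gp_cover_def mod_rep_eq_iff)
  then show "exactly_one (U (gp_cover n k (a + 1) b) \<in> C) (U (gp_cover n k (a - 1) b) \<in> C)
      (V ?j \<in> C)"
    using code[of "U ?j"] j gp_adj_U_iff[of n ?j k] assms(1)
    by (simp add: gp_cover_neighbours[OF n] flip: ex1_mem_three_iff_exactly_one)
  have "\<not> int n dvd int (2 * k)"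
    using assms(4) by (metis int_dvd_int_iff dvd_eq_mod_eq_0)
  then have "gp_cover n k a (b + 1) \<noteq> gp_cover n k a (b - 1)"
    using n by (simp add: gp_cover_def mod_rep_eq_iff algebra_simps)
  then show "exactly_one (V (gp_cover n k a (b + 1)) \<in> C) (V (gp_cover n k a (b - 1)) \<in> C)
      (U ?j \<in> C)"
    using code[of "V ?j"] j gp_adj_V_iff[of k n ?j] assms(2,3)
    by (simp add: gp_cover_neighbours[OF n] flip: ex1_mem_three_iff_exactly_one)
qed

lemma code_edge_between_U_V:
  assumes "2 \<le> n" "e \<in> edges_between n k C C" "e \<in> edges_between n k (Uset n) (Vset n)"
  obtains i where "i < n" "U i \<in> C" "V i \<in> C"
proof -
  obtain x y where "e = {x, y}" "x \<in> C" "y \<in> C"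
    using assms(2) unfolding edges_between_def by blast
  moreover obtain i i' where "e = {U i, V i'}" "i < n" "gp_adj n k (U i) (V i')"
    using assms(3) unfolding edges_between_def Uset_def Vset_def by blast
  moreover from this have "i' = i"
    using gp_adj_U_iff[OF assms(1)] by blast
  ultimately show thesis
    using that by (auto simp: doubleton_eq_iff)
qed

lemma code_edge_within_U:
  assumes "2 \<le> n" "e \<in> edges_between n k C C" "e \<in> edges_between n k (Uset n) (Uset n)"
  obtains j where "j < n" "U j \<in> C" "U (mod_rep n (int j + 1)) \<in> C"
proof -
  obtain x y where "e = {x, y}" "x \<in> C" "y \<in> C"
    using assms(2) unfolding edges_between_def by blast
  moreover obtain i i' where "e = {U i, U i'}" "i < n" "gp_adj n k (U i) (U i')"
    using assms(3) unfolding edges_between_def Uset_def by blast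
  ultimately have "U i \<in> C" "U i' \<in> C"
    and "i' = mod_rep n (int i + 1) \<or> i' = mod_rep n (int i - 1)"
    using gp_adj_U_iff[OF assms(1)] by (auto simp: doubleton_eq_iff)
  then consider "i' = mod_rep n (int i + 1)" | "i' = mod_rep n (int i - 1)"
    by blast
  then show thesis
  proof cases
    case 1
    then show thesis
      using that \<open>i < n\<close> \<open>U i \<in> C\<close> \<open>U i' \<in> C\<close> by blast
  next
    case 2
    then have "i' < n" "mod_rep n (int i' + 1) = i"
      using assms(1) \<open>i < n\<close> by (simp_all add: mod_rep_less)
    then show thesis
      using that \<open>U i \<in> C\<close> \<open>U i' \<in> C\<close> by metis
  qed
qed

theorem lemma4p3:
  fixes n k :: nat and C :: "gpv set"
  assumes "n \<ge> 3" and "0 < k" and "k < n" and "(2 * k) mod n \<noteq> 0"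
    and "total_perfect_code n k C"
    and "edges_between n k C C \<inter> edges_between n k (Uset n) (Uset n) \<noteq> {}"
  shows "edges_between n k C C \<inter> edges_between n k (Uset n) (Vset n) = {}"
proof (rule ccontr)
  let ?cu = "\<lambda>a b. U (gp_cover n k a b) \<in> C" and ?cv = "\<lambda>a b. V (gp_cover n k a b) \<in> C"
  have lift: "lattice_tpc ?cu ?cv"
    using assms(1-5) by (rule lattice_tpc_of_total_perfect_code)
  have n: "2 \<le> n"
    using assms(1) by simp
  assume "edges_between n k C C \<inter> edges_between n k (Uset n) (Vset n) \<noteq> {}"
  then obtain i where "i < n" "U i \<in> C" "V i \<in> C"
    using code_edge_between_U_V[OF n] by blast
  obtain j where "j < n" "U j \<in> C" "U (mod_rep n (int j + 1)) \<in> C"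
    using assms(6) code_edge_within_U[OF n] by blast
  then have "?cu (int i) 0" "?cv (int i) 0" "?cu (int j) 0" "?cu (int j + 1) 0"
    using \<open>i < n\<close> \<open>U i \<in> C\<close> \<open>V i \<in> C\<close> by (simp_all add: gp_cover_def)
  then show False
    using lattice_tpc_rung_row_no_U_edge[OF lift] by blast
qed

end
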